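(* Let $\mathcal S$ be a finite state set with $n = |\mathcal S|$, and let $\mathcal S_T\subset\mathcal S$ be a nonempty set of terminal states with $m=|\mathcal S_T|$. Let $\mathbf P$ be an $n\times n$ row-stochastic matrix (the transition matrix induced by a default policy) in which every terminal state is absorbing: $\mathbf P(s_T,s_T)=1$ for all $s_T\in\mathcal S_T$. Fix $\lambda>0$ and rewards $r(s)<0$ for all non-terminal $s\in\mathcal S\setminus\mathcal S_T$, and for $\delta>0$ set $r(s_T) = -\delta$ for every $s_T\in\mathcal S_T$. Let $\mathbf R_\delta = \operatorname{diag}(\exp(-\mathbf r/\lambda))$ and $\mathbf Z_\delta = (\mathbf R_\delta - \mathbf P)^{-1}$ (the default representation). Then, as $\delta\to 0^+$, the columns of $\mathbf Z_\delta$ corresponding to the terminal states form a basis of the eigenspace of the principal eigenvalue of $\mathbf Z_\delta$. Precisely: $\mathbf R_\delta-\mathbf P$ is invertible for every $\delta>0$; there is $\delta_0>0$ such that for all $\delta\in(0,\delta_0)$ the eigenvalue of $\mathbf Z_\delta$ of largest modulus is $1/(e^{\delta/\lambda}-1)$ and its eigenspace $\mathcal E_\delta$ has dimension $m$; the span $\mathcal C_\delta$ of the $m$ columns of $\mathbf Z_\delta$ indexed by $\mathcal S_T$ has dimension $m$; and $\mathcal C_\delta$ converges to $\mathcal E_\delta$ as $\delta\to0^+$, in the sense that $\|\Pi_{\mathcal C_\delta} - \Pi_{\mathcal E_\delta}\|\to 0$, where $\Pi_{\mathcal W}$ denotes the orthogonal projector onto a subspace $\mathcal W$.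
   Context: $\exp$ and $\operatorname{diag}$ act entrywise, so $\mathbf R_\delta$ is the diagonal matrix with entries $e^{-r(s)/\lambda}$. The principal eigenvalue of a matrix is its eigenvalue of largest modulus. The matrix $\mathbf Z_\delta$ is not symmetrized here. *)

theory Defs
  imports "HOL-Analysis.Analysis"
begin

definition row_stochastic :: "real^'n^'n \<Rightarrow> bool" where
  "row_stochastic P \<longleftrightarrow> (\<forall>i j. 0 \<le> P$i$j) \<and> (\<forall>i. (\<Sum>j\<in>UNIV. P$i$j) = 1)"

definition reward_delta :: "'n set \<Rightarrow> ('n \<Rightarrow> real) \<Rightarrow> real \<Rightarrow> 'n \<Rightarrow> real" where
  "reward_delta T r \<delta> s = (if s \<in> T then - \<delta> else r s)"

definition R_mat :: "'n set \<Rightarrow> ('n \<Rightarrow> real) \<Rightarrow> real \<Rightarrow> real \<Rightarrow> real^'n^'n" where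
  "R_mat T r lam \<delta> = (\<chi> i j. if i = j then exp (- reward_delta T r \<delta> i / lam) else 0)"

definition Z_mat :: "'n set \<Rightarrow> ('n \<Rightarrow> real) \<Rightarrow> real \<Rightarrow> real^'n^'n \<Rightarrow> real \<Rightarrow> real^'n^'n" where
  "Z_mat T r lam P \<delta> = matrix_inv (R_mat T r lam \<delta> - P)"

definition cmat :: "real^'n^'m \<Rightarrow> complex^'n^'m" where
  "cmat A = (\<chi> i j. complex_of_real (A$i$j))"

definition is_eigenvalue :: "real^'n^'n \<Rightarrow> complex \<Rightarrow> bool" where
  "is_eigenvalue A z \<longleftrightarrow> (\<exists>v::complex^'n. v \<noteq> 0 \<and> cmat A *v v = z *s v)"

definition eigenspace :: "real^'n^'n \<Rightarrow> real \<Rightarrow> (real^'n) set" where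
  "eigenspace A \<mu> = {v. A *v v = \<mu> *\<^sub>R v}"

definition orth_proj :: "('a::euclidean_space) set \<Rightarrow> 'a \<Rightarrow> 'a" where
  "orth_proj W x = (THE p. p \<in> W \<and> (\<forall>w\<in>W. (x - p) \<bullet> w = 0))"

end

theory Submission
  imports Defs
begin

(* Write c = exp (delta / lam) - 1 and a s = exp (- r s / lam). Terminal states are absorbing,
   so the terminal rows of R_delta - P are c times unit rows. Hence y is an eigenvector of
   Z_delta for 1 / c iff (R_delta - P) y = c y iff (a s - c) y_s = (P y)_s at every non-
   terminal s, the terminal coordinates being free: an m-dimensional space H(c) = harmonic c.
   The terminal columns of Z_delta are the y with (R_delta - P) y supported on the terminal
   states, i.e. they span H(0). Off the terminal states a s - 1 >= g = gap > 0, so all these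
   linear systems are strictly diagonally dominant, uniformly in c <= g/2. This yields
   invertibility, the spectral gap (at a coordinate of maximal modulus of an eigenvector of
   R_delta - P with eigenvalue w, either w = c or |w| >= g > c), and a distance O(c) between
   H(c) and H(0), hence between their projectors. *)

subsection \<open>Strictly diagonally dominant matrices\<close>

definition diag_dominant_by :: "real \<Rightarrow> real^'n^'n \<Rightarrow> bool" where
  "diag_dominant_by \<gamma> A \<longleftrightarrow> (\<forall>i. \<gamma> \<le> A$i$i - (\<Sum>j\<in>UNIV-{i}. \<bar>A$i$j\<bar>))"

lemma exists_max_norm_component:
  fixes x :: "'a::real_normed_vector^'n"
  obtains k where "\<And>i. norm (x$i) \<le> norm (x$k)"
proof -
  let ?S = "range (\<lambda>i. norm (x$i))"
  have "Max ?S \<in> ?S" by (rule Max_in) auto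
  then obtain k where k: "Max ?S = norm (x$k)" by blast
  have "norm (x$i) \<le> norm (x$k)" for i
    unfolding k[symmetric] by (rule Max_ge) auto
  then show ?thesis using that by blast
qed

lemma norm_le_sqrt_card_mult:
  fixes x :: "real^'n"
  assumes "\<And>i. \<bar>x$i\<bar> \<le> b"
  shows "norm x \<le> sqrt (real CARD('n)) * b"
proof -
  have "norm x \<le> norm (\<chi> i::'n. b)"
    using assms by (intro norm_le_componentwise_cart) (auto intro: order_trans[OF _ abs_ge_self])
  also have "\<dots> = sqrt (real CARD('n)) * b"
    using assms[of undefined] by (simp add: norm_vec_def L2_set_def real_sqrt_mult)
  finally show ?thesis .
qed

lemma diag_dominant_norm_le:
  fixes A :: "real^'n^'n"
  assumes "diag_dominant_by \<gamma> A" and "0 \<le> \<gamma>"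
  shows "\<gamma> * norm x \<le> sqrt (real CARD('n)) * norm (A *v x)"
proof -
  obtain k where k: "\<And>i. \<bar>x$i\<bar> \<le> \<bar>x$k\<bar>"
    using exists_max_norm_component[of x] by auto
  define off where "off = (\<Sum>j\<in>UNIV-{k}. \<bar>A$k$j\<bar>)"
  have dom: "\<gamma> \<le> A$k$k - off"
    using assms(1) by (simp add: diag_dominant_by_def off_def)
  have "0 \<le> off" unfolding off_def by (rule sum_nonneg) simp
  have row: "(A *v x)$k = A$k$k * x$k + (\<Sum>j\<in>UNIV-{k}. A$k$j * x$j)"
    by (simp add: matrix_vector_mult_def sum.remove[of UNIV k])
  have "\<bar>\<Sum>j\<in>UNIV-{k}. A$k$j * x$j\<bar> \<le> (\<Sum>j\<in>UNIV-{k}. \<bar>A$k$j\<bar> * \<bar>x$k\<bar>)"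
    by (rule order_trans[OF sum_abs sum_mono]) (simp add: abs_mult k mult_left_mono)
  then have "\<bar>\<Sum>j\<in>UNIV-{k}. A$k$j * x$j\<bar> \<le> off * \<bar>x$k\<bar>"
    by (simp add: off_def sum_distrib_right)
  moreover have "\<bar>A$k$k * x$k\<bar> = A$k$k * \<bar>x$k\<bar>"
    using dom \<open>0 \<le> off\<close> assms(2) by (simp add: abs_mult)
  ultimately have "(A$k$k - off) * \<bar>x$k\<bar> \<le> \<bar>(A *v x)$k\<bar>"
    unfolding row by (simp add: left_diff_distrib)
  then have xk: "\<gamma> * \<bar>x$k\<bar> \<le> norm (A *v x)"
    using dom component_le_norm_cart[of "A *v x" k]
    by (meson abs_ge_zero mult_right_mono order_trans)
  have "\<gamma> * norm x \<le> sqrt (real CARD('n)) * (\<gamma> * \<bar>x$k\<bar>)"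
    using norm_le_sqrt_card_mult[OF k] assms(2) by (simp add: mult_left_mono mult.left_commute)
  also have "\<dots> \<le> sqrt (real CARD('n)) * norm (A *v x)"
    using xk by (rule mult_left_mono) simp
  finally show ?thesis .
qed

lemma diag_dominant_invertible:
  fixes A :: "real^'n^'n"
  assumes "diag_dominant_by \<gamma> A" and "0 < \<gamma>"
  shows "invertible A"
proof -
  have "x = 0" if "A *v x = 0" for x
    using diag_dominant_norm_le[OF assms(1), of x] that assms(2)
    by (simp add: mult_le_0_iff)
  then have "inj ((*v) A)"
    by (intro injI) (metis matrix_vector_mult_diff_distrib right_minus_eq)
  then show ?thesis
    by (simp add: invertible_left_inverse matrix_left_invertible_injective)
qed

lemma
  fixes A :: "'a::field^'n^'n"
  assumes "invertible A"
  shows matrix_mul_matrix_inv: "A ** matrix_inv A = mat 1"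
    and matrix_inv_mul_matrix: "matrix_inv A ** A = mat 1"
proof -
  have "A ** matrix_inv A = mat 1 \<and> matrix_inv A ** A = mat 1"
    using assms unfolding invertible_def matrix_inv_def by (rule someI_ex)
  then show "A ** matrix_inv A = mat 1" "matrix_inv A ** A = mat 1" by auto
qed

lemma
  fixes A :: "'a::field^'n^'n"
  assumes "invertible A"
  shows matrix_vector_mul_matrix_inv: "A *v (matrix_inv A *v x) = x"
    and matrix_inv_matrix_vector_mul: "matrix_inv A *v (A *v x) = x"
  by (simp_all add: matrix_vector_mul_assoc matrix_mul_matrix_inv[OF assms]
      matrix_inv_mul_matrix[OF assms])

lemma inj_matrix_inv_vector_mult:
  fixes A :: "'a::field^'n^'n"
  assumes "invertible A"
  shows "inj ((*v) (matrix_inv A))"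
  by (metis injI matrix_vector_mul_matrix_inv[OF assms])

lemma kernel_rows_eq_span_matrix_inv_axis:
  fixes M :: "real^'n^'n"
  assumes "invertible M"
  shows "{y. \<forall>s. s \<notin> T \<longrightarrow> (M *v y)$s = 0} = span ((\<lambda>t. matrix_inv M *v axis t 1) ` T)"
    (is "?L = span ?G")
proof
  have "subspace ?L"
    by (simp add: subspace_def matrix_vector_right_distrib matrix_vector_mult_scaleR)
  moreover have "?G \<subseteq> ?L"
    using matrix_vector_mul_matrix_inv[OF assms] by (auto simp: axis_def)
  ultimately show "span ?G \<subseteq> ?L"
    by (rule span_minimal[rotated])
  show "?L \<subseteq> span ?G"
  proof
    fix y assume y: "y \<in> ?L"
    have "M *v y = (\<Sum>t\<in>T. (M *v y)$t *\<^sub>R axis t 1)"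
      using y by (auto simp: vec_eq_iff axis_def if_distrib cong: if_cong)
    then have "y = matrix_inv M *v (\<Sum>t\<in>T. (M *v y)$t *\<^sub>R axis t 1)"
      using matrix_inv_matrix_vector_mul[OF assms, of y] by simp
    also have "\<dots> = (\<Sum>t\<in>T. (M *v y)$t *\<^sub>R (matrix_inv M *v axis t 1))"
      by (simp add: vec.sum matrix_vector_mult_scaleR)
    also have "\<dots> \<in> span ?G"
      by (intro span_sum span_scale span_base) auto
    finally show "y \<in> span ?G" .
  qed
qed

lemma dim_span_image_axis:
  fixes N :: "real^'n^'n"
  assumes "inj ((*v) N)"
  shows "dim (span ((\<lambda>t. N *v axis t 1) ` T)) = card T"
proof -
  have "independent ((\<lambda>t. axis t (1::real)) ` T)"
    by (rule independent_mono[OF independent_Basis]) auto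
  then have "independent ((*v) N ` (\<lambda>t. axis t 1) ` T)"
    using assms by (intro linear_independent_injective_image) (auto simp: inj_on_def)
  moreover have "inj (\<lambda>t. N *v axis t (1::real))"
    using assms by (intro injI) (simp add: inj_eq axis_eq_axis)
  ultimately show ?thesis
    by (simp add: image_image dim_eq_card_independent card_image inj_on_subset)
qed

subsection \<open>Orthogonal projectors\<close>

lemma orth_proj_eqI:
  fixes W :: "'a::euclidean_space set"
  assumes "subspace W" "p \<in> W" "\<And>w. w \<in> W \<Longrightarrow> (x - p) \<bullet> w = 0"
  shows "orth_proj W x = p"
  unfolding orth_proj_def
proof (rule the_equality)
  show "p \<in> W \<and> (\<forall>w\<in>W. (x - p) \<bullet> w = 0)" using assms by simp
  fix q assume q: "q \<in> W \<and> (\<forall>w\<in>W. (x - q) \<bullet> w = 0)"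
  have "p - q \<in> W" using assms q by (simp add: subspace_diff)
  then have "(x - q) \<bullet> (p - q) - (x - p) \<bullet> (p - q) = 0" using assms q by auto
  then have "(p - q) \<bullet> (p - q) = 0" by (simp add: algebra_simps)
  then show "q = p" by simp
qed

lemma
  fixes W :: "'a::euclidean_space set"
  assumes "subspace W"
  shows orth_proj_in: "orth_proj W x \<in> W"
    and orth_proj_orthogonal: "w \<in> W \<Longrightarrow> (x - orth_proj W x) \<bullet> w = 0"
proof -
  obtain p z where "p \<in> span W" "\<And>w. w \<in> span W \<Longrightarrow> orthogonal z w" "x = p + z"
    using orthogonal_subspace_decomp_exists by blast
  moreover have "span W = W"
    using assms by simp
  ultimately have p: "p \<in> W" "\<And>w. w \<in> W \<Longrightarrow> (x - p) \<bullet> w = 0"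
    by (auto simp: orthogonal_def)
  then show "orth_proj W x \<in> W" "w \<in> W \<Longrightarrow> (x - orth_proj W x) \<bullet> w = 0"
    using orth_proj_eqI[OF assms p] by auto
qed

lemma linear_orth_proj:
  fixes W :: "'a::euclidean_space set"
  assumes "subspace W"
  shows "linear (orth_proj W)"
proof
  fix x y
  show "orth_proj W (x + y) = orth_proj W x + orth_proj W y"
    using orth_proj_in[OF assms] orth_proj_orthogonal[OF assms]
    by (intro orth_proj_eqI[OF assms]) (simp_all add: subspace_add[OF assms] add_diff_add inner_add_left)
next
  fix c x
  show "orth_proj W (c *\<^sub>R x) = c *\<^sub>R orth_proj W x"
    using orth_proj_in[OF assms] orth_proj_orthogonal[OF assms]
    by (intro orth_proj_eqI[OF assms])
       (simp_all add: subspace_scale[OF assms] flip: scaleR_diff_right)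
qed

lemma norm_minus_orth_proj_le:
  fixes W :: "'a::euclidean_space set"
  assumes "subspace W" "w \<in> W"
  shows "norm (x - orth_proj W x) \<le> norm (x - w)"
proof -
  let ?p = "orth_proj W x"
  have "orthogonal (x - ?p) (?p - w)"
    using assms orth_proj_in[OF assms(1)] orth_proj_orthogonal[OF assms(1)]
    by (simp add: orthogonal_def subspace_diff)
  then have "(norm (x - w))\<^sup>2 = (norm (x - ?p))\<^sup>2 + (norm (?p - w))\<^sup>2"
    by (metis norm_add_Pythagorean diff_add_cancel add_diff_eq)
  then have "(norm (x - ?p))\<^sup>2 \<le> (norm (x - w))\<^sup>2" by simp
  then show ?thesis by (rule power2_le_imp_le) simp
qed

lemma norm_orth_proj_le:
  fixes W :: "'a::euclidean_space set"
  assumes "subspace W"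
  shows "norm (orth_proj W x) \<le> norm x"
proof -
  have "orthogonal (x - orth_proj W x) (orth_proj W x)"
    using orth_proj_in[OF assms] orth_proj_orthogonal[OF assms] by (simp add: orthogonal_def)
  then have "(norm x)\<^sup>2 = (norm (x - orth_proj W x))\<^sup>2 + (norm (orth_proj W x))\<^sup>2"
    by (metis norm_add_Pythagorean diff_add_cancel)
  then have "(norm (orth_proj W x))\<^sup>2 \<le> (norm x)\<^sup>2" by simp
  then show ?thesis by (rule power2_le_imp_le) simp
qed

lemma norm_orth_proj_diff_le:
  fixes A B :: "'a::euclidean_space set"
  assumes A: "subspace A" and B: "subspace B" and "0 \<le> e"
    and AB: "\<And>y. y \<in> A \<Longrightarrow> norm (y - orth_proj B y) \<le> e * norm y"
    and BA: "\<And>y. y \<in> B \<Longrightarrow> norm (y - orth_proj A y) \<le> e * norm y"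
  shows "norm (orth_proj A x - orth_proj B x) \<le> 2 * e * norm x"
proof -
  define y where "y = orth_proj A x"
  define u where "u = x - y"
  define q where "q = orth_proj B u"
  have split: "orth_proj A x - orth_proj B x = (y - orth_proj B y) - q"
    using linear_add[OF linear_orth_proj[OF B], of y u] by (simp add: u_def y_def q_def)
  have "norm y \<le> norm x" "norm u \<le> norm x"
    using norm_orth_proj_le[OF A] norm_minus_orth_proj_le[OF A subspace_0[OF A]]
    by (simp_all add: u_def y_def)
  have "y \<in> A" using orth_proj_in[OF A] by (simp add: y_def)
  then have first: "norm (y - orth_proj B y) \<le> e * norm x"
    using AB \<open>norm y \<le> norm x\<close> \<open>0 \<le> e\<close> by (meson mult_left_mono order_trans)
  txt \<open>Since \<open>u \<perp> A\<close>, the inner product \<open>u \<bullet> q\<close> only sees the part of \<open>q \<in> B\<close>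
    that sticks out of \<open>A\<close>.\<close>
  have "q \<bullet> q = u \<bullet> q"
    using orth_proj_orthogonal[OF B orth_proj_in[OF B, of u], where x = u]
    by (simp add: q_def inner_diff_left)
  also have "\<dots> = u \<bullet> (q - orth_proj A q)"
    using orth_proj_orthogonal[OF A orth_proj_in[OF A]]
    by (simp add: u_def y_def inner_diff_right)
  also have "\<dots> \<le> norm u * norm (q - orth_proj A q)"
    by (rule Cauchy_Schwarz_ineq2[THEN abs_le_D1])
  also have "\<dots> \<le> norm u * (e * norm q)"
    using BA[of q] orth_proj_in[OF B] by (simp add: q_def mult_left_mono)
  finally have "norm q \<le> e * norm u"
    using \<open>0 \<le> e\<close> by (cases "q = 0") (auto simp: dot_square_norm power2_eq_square mult.left_commute)
  also have "\<dots> \<le> e * norm x" using \<open>norm u \<le> norm x\<close> \<open>0 \<le> e\<close> by (rule mult_left_mono)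
  finally have "norm q \<le> e * norm x" .
  then show ?thesis
    unfolding split using first norm_triangle_ineq4[of "y - orth_proj B y" q] by linarith
qed

lemma onorm_orth_proj_diff_nonneg:
  fixes A B :: "'a::euclidean_space set"
  assumes "subspace A" "subspace B"
  shows "0 \<le> onorm (\<lambda>x. orth_proj A x - orth_proj B x)"
  using assms
  by (intro onorm_pos_le bounded_linear_sub linear_conv_bounded_linear[THEN iffD1] linear_orth_proj)

lemma cmat_mult: "cmat (A ** B) = cmat A ** cmat B"
  by (simp add: cmat_def matrix_matrix_mult_def vec_eq_iff)

lemma cmat_one: "cmat (mat 1) = mat 1"
  by (simp add: cmat_def mat_def vec_eq_iff)

lemma cmat_mult_of_real_vec:
  "cmat A *v (\<chi> i. complex_of_real (v$i)) = (\<chi> i. complex_of_real ((A *v v)$i))"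
  by (simp add: cmat_def matrix_vector_mult_def vec_eq_iff)

lemma cmat_mult_vec_nth: "(cmat A *v v)$k = (\<Sum>j\<in>UNIV. complex_of_real (A$k$j) * v$j)"
  by (simp add: cmat_def matrix_vector_mult_def)

lemma is_eigenvalue_of_real:
  assumes "v \<noteq> 0" "A *v v = \<mu> *\<^sub>R v"
  shows "is_eigenvalue A (complex_of_real \<mu>)"
  unfolding is_eigenvalue_def
proof (intro exI conjI)
  show "(\<chi> i. complex_of_real (v$i)) \<noteq> 0"
    using assms(1) by (auto simp: vec_eq_iff)
  show "cmat A *v (\<chi> i. complex_of_real (v$i)) = complex_of_real \<mu> *s (\<chi> i. complex_of_real (v$i))"
    by (simp add: cmat_mult_of_real_vec assms(2) vec_eq_iff)
qed

lemma is_eigenvalue_matrix_inv: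
  fixes A :: "real^'n^'n"
  assumes "invertible A" "is_eigenvalue (matrix_inv A) z"
  shows "z \<noteq> 0 \<and> is_eigenvalue A (1 / z)"
proof -
  obtain v where "v \<noteq> 0" and v: "cmat (matrix_inv A) *v v = z *s v"
    using assms(2) unfolding is_eigenvalue_def by blast
  have "cmat A ** cmat (matrix_inv A) = mat 1"
    by (simp add: matrix_mul_matrix_inv[OF assms(1)] cmat_one flip: cmat_mult)
  then have "v = cmat A *v (cmat (matrix_inv A) *v v)"
    by (simp add: matrix_vector_mul_assoc)
  also have "\<dots> = z *s (cmat A *v v)"
    by (simp add: v vector_scalar_commute)
  finally have "v = z *s (cmat A *v v)" .
  with \<open>v \<noteq> 0\<close> have "z \<noteq> 0" and "cmat A *v v = (1 / z) *s v"
    by (auto simp: vec_eq_iff field_simps)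
  with \<open>v \<noteq> 0\<close> show ?thesis
    unfolding is_eigenvalue_def by blast
qed

lemma eigenspace_matrix_inv:
  fixes A :: "real^'n^'n"
  assumes "invertible A" "\<mu> \<noteq> 0"
  shows "eigenspace (matrix_inv A) (1 / \<mu>) = eigenspace A \<mu>"
proof -
  have "matrix_inv A *v y = (1 / \<mu>) *\<^sub>R y \<longleftrightarrow> A *v y = \<mu> *\<^sub>R y" for y
  proof
    assume "matrix_inv A *v y = (1 / \<mu>) *\<^sub>R y"
    then have "y = (1 / \<mu>) *\<^sub>R (A *v y)"
      by (metis matrix_vector_mul_matrix_inv[OF assms(1)] matrix_vector_mult_scaleR)
    then have "\<mu> *\<^sub>R y = A *v y"
      using assms(2) by (metis scaleR_scaleR nonzero_mult_div_cancel_left scaleR_one times_divide_eq_right)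
    then show "A *v y = \<mu> *\<^sub>R y" by simp
  next
    assume "A *v y = \<mu> *\<^sub>R y"
    then have "y = \<mu> *\<^sub>R (matrix_inv A *v y)"
      by (metis matrix_inv_matrix_vector_mul[OF assms(1)] matrix_vector_mult_scaleR)
    then have "(1 / \<mu>) *\<^sub>R y = matrix_inv A *v y"
      using assms(2) by (metis scaleR_scaleR nonzero_mult_div_cancel_left scaleR_one
          times_divide_eq_right mult.commute)
    then show "matrix_inv A *v y = (1 / \<mu>) *\<^sub>R y" by simp
  qed
  then show ?thesis unfolding eigenspace_def by simp
qed

subsection \<open>Absorbing chains\<close>

locale absorbing_chain =
  fixes P :: "real^'n^'n" and T :: "'n set" and r :: "'n \<Rightarrow> real" and lam :: real
  assumes T_ne: "T \<noteq> {}" and stoch: "row_stochastic P"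
    and absorbing: "\<forall>s\<in>T. P$s$s = 1" and lam: "lam > 0"
    and rneg: "\<forall>s. s \<notin> T \<longrightarrow> r s < 0"
begin

definition B :: "real \<Rightarrow> real^'n^'n" where "B \<delta> = R_mat T r lam \<delta> - P"

definition a :: "'n \<Rightarrow> real" where "a s = exp (- r s / lam)"

text \<open>The \<open>1\<close> keeps the minimum well defined when every state is terminal.\<close>
definition gap :: real where "gap = Min (insert 1 ((\<lambda>s. a s - 1) ` (- T)))"

definition shift :: "real \<Rightarrow> real" where "shift \<delta> = exp (\<delta> / lam) - 1"

definition harmonic :: "real \<Rightarrow> (real^'n) set" where
  "harmonic c = {y. \<forall>s. s \<notin> T \<longrightarrow> (a s - c) * y$s = (\<Sum>j\<in>UNIV. P$s$j * y$j)}"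

text \<open>The defining equations of \<open>harmonic c\<close> on the non-terminal rows, completed by the
  identity on the terminal rows.\<close>
definition shifted :: "real \<Rightarrow> real^'n^'n" where
  "shifted c = (\<chi> i j. if i \<in> T then of_bool (i = j) else (if i = j then a i - c else 0) - P$i$j)"

lemma P_nonneg: "0 \<le> P$i$j"
  using stoch by (simp add: row_stochastic_def)

lemma P_offdiag_sum: "(\<Sum>j\<in>UNIV-{i}. P$i$j) = 1 - P$i$i"
proof -
  have "(\<Sum>j\<in>UNIV. P$i$j) = 1"
    using stoch by (simp add: row_stochastic_def)
  then show ?thesis
    using sum.remove[of UNIV i "\<lambda>j. P$i$j"] by simp
qed

lemma P_terminal_row:
  assumes "s \<in> T"
  shows "P$s$j = of_bool (j = s)"
proof -
  have "(\<Sum>j\<in>UNIV-{s}. P$s$j) = 0"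
    using P_offdiag_sum[of s] absorbing assms by simp
  then have "P$s$j = 0" if "j \<noteq> s" for j
    using sum_nonneg_eq_0_iff[of "UNIV-{s}" "\<lambda>j. P$s$j"] P_nonneg that by auto
  then show ?thesis using absorbing assms by auto
qed

lemma a_gt_1: "s \<notin> T \<Longrightarrow> 1 < a s"
  using rneg lam by (simp add: a_def divide_neg_pos)

lemma gap_pos: "0 < gap"
  using a_gt_1 by (simp add: gap_def)

lemma gap_le_1: "gap \<le> 1"
  by (simp add: gap_def)

lemma gap_le: "s \<notin> T \<Longrightarrow> gap \<le> a s - 1"
  by (simp add: gap_def)

lemma shift_pos: "0 < \<delta> \<Longrightarrow> 0 < shift \<delta>"
  using lam by (simp add: shift_def)

lemma shift_tendsto_0: "(shift \<longlongrightarrow> 0) (at_right 0)"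
proof -
  have "((\<lambda>\<delta>. exp (\<delta> / lam) - 1) \<longlongrightarrow> exp (0 / lam) - 1) (at_right 0)"
    using lam by (intro tendsto_intros) auto
  then show ?thesis by (simp add: shift_def[abs_def])
qed

lemma eventually_small_shift: "\<forall>\<^sub>F \<delta> in at_right 0. 0 < \<delta> \<and> shift \<delta> < gap / 2"
proof -
  have "\<forall>\<^sub>F \<delta> in at_right 0. shift \<delta> < gap / 2"
    by (rule order_tendstoD(2)[OF shift_tendsto_0]) (simp add: gap_pos)
  then show ?thesis
    by (rule eventually_conj[OF eventually_at_right_less])
qed

lemma B_nth: "B \<delta> $i$j = (if i = j then if i \<in> T then exp (\<delta> / lam) else a i else 0) - P$i$j"
  by (simp add: B_def R_mat_def reward_delta_def a_def)

lemma B_terminal_row: "s \<in> T \<Longrightarrow> B \<delta> $s$j = (if j = s then shift \<delta> else 0)"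
  by (auto simp: B_nth P_terminal_row shift_def)

lemma B_nonterminal_row: "s \<notin> T \<Longrightarrow> B \<delta> $s$j = (if j = s then a s else 0) - P$s$j"
  by (auto simp: B_nth)

lemma B_mult_nth:
  "(B \<delta> *v y)$s = (if s \<in> T then shift \<delta> * y$s else a s * y$s - (\<Sum>j\<in>UNIV. P$s$j * y$j))"
  by (auto simp: matrix_vector_mult_def B_nth P_terminal_row shift_def left_diff_distrib
      sum_subtractf if_distrib[of "\<lambda>x. x * _"] cong: if_cong)

lemma shifted_mult_nth:
  "(shifted c *v y)$s = (if s \<in> T then y$s else (a s - c) * y$s - (\<Sum>j\<in>UNIV. P$s$j * y$j))"
  by (auto simp: matrix_vector_mult_def shifted_def left_diff_distrib sum_subtractf
      if_distrib[of "\<lambda>x. x * _"] cong: if_cong)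

lemma diag_dominant_B: "diag_dominant_by (min (shift \<delta>) gap) (B \<delta>)"
  unfolding diag_dominant_by_def
proof
  fix i
  show "min (shift \<delta>) gap \<le> B \<delta> $i$i - (\<Sum>j\<in>UNIV-{i}. \<bar>B \<delta> $i$j\<bar>)"
  proof (cases "i \<in> T")
    case True
    then show ?thesis by (simp add: B_nth P_terminal_row shift_def)
  next
    case False
    have "(\<Sum>j\<in>UNIV-{i}. \<bar>B \<delta> $i$j\<bar>) = (\<Sum>j\<in>UNIV-{i}. P$i$j)"
      by (rule sum.cong) (auto simp: B_nth P_nonneg)
    then show ?thesis using False P_offdiag_sum[of i] gap_le[OF False] by (simp add: B_nth)
  qed
qed

lemma diag_dominant_shifted:
  assumes "c \<le> gap / 2"
  shows "diag_dominant_by (gap / 2) (shifted c)"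
  unfolding diag_dominant_by_def
proof
  fix i
  show "gap / 2 \<le> shifted c $i$i - (\<Sum>j\<in>UNIV-{i}. \<bar>shifted c $i$j\<bar>)"
  proof (cases "i \<in> T")
    case True
    then show ?thesis using gap_le_1 by (simp add: shifted_def)
  next
    case False
    have "(\<Sum>j\<in>UNIV-{i}. \<bar>shifted c $i$j\<bar>) = (\<Sum>j\<in>UNIV-{i}. P$i$j)"
      by (rule sum.cong) (use False in \<open>auto simp: shifted_def P_nonneg\<close>)
    then show ?thesis
      using False P_offdiag_sum[of i] gap_le[OF False] assms by (simp add: shifted_def)
  qed
qed

lemma invertible_B: "0 < \<delta> \<Longrightarrow> invertible (B \<delta>)"
  by (rule diag_dominant_invertible[OF diag_dominant_B]) (simp add: shift_pos gap_pos)

lemma invertible_shifted: "c \<le> gap / 2 \<Longrightarrow> invertible (shifted c)"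
  by (rule diag_dominant_invertible[OF diag_dominant_shifted]) (simp_all add: gap_pos)

lemma harmonic_eq_span:
  assumes "c \<le> gap / 2"
  shows "harmonic c = span ((\<lambda>t. matrix_inv (shifted c) *v axis t 1) ` T)"
proof -
  have "harmonic c = {y. \<forall>s. s \<notin> T \<longrightarrow> (shifted c *v y)$s = 0}"
    by (simp add: harmonic_def shifted_mult_nth)
  also have "\<dots> = span ((\<lambda>t. matrix_inv (shifted c) *v axis t 1) ` T)"
    by (rule kernel_rows_eq_span_matrix_inv_axis[OF invertible_shifted[OF assms]])
  finally show ?thesis .
qed

lemma subspace_harmonic: "c \<le> gap / 2 \<Longrightarrow> subspace (harmonic c)"
  by (simp add: harmonic_eq_span)

lemma dim_harmonic: "c \<le> gap / 2 \<Longrightarrow> dim (harmonic c) = card T"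
  unfolding harmonic_eq_span
  by (intro dim_span_image_axis inj_matrix_inv_vector_mult invertible_shifted)

lemma span_terminal_columns:
  assumes "0 < \<delta>"
  shows "span ((\<lambda>j. column j (Z_mat T r lam P \<delta>)) ` T) = harmonic 0"
proof -
  have "harmonic 0 = {y. \<forall>s. s \<notin> T \<longrightarrow> (B \<delta> *v y)$s = 0}"
    by (simp add: harmonic_def B_mult_nth)
  also have "\<dots> = span ((\<lambda>t. matrix_inv (B \<delta>) *v axis t 1) ` T)"
    by (rule kernel_rows_eq_span_matrix_inv_axis[OF invertible_B[OF assms]])
  finally show ?thesis by (simp add: Z_mat_def B_def matrix_vector_mult_basis)
qed

lemma dim_terminal_columns:
  "0 < \<delta> \<Longrightarrow> dim (span ((\<lambda>j. column j (Z_mat T r lam P \<delta>)) ` T)) = card T"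
  using dim_span_image_axis[OF inj_matrix_inv_vector_mult[OF invertible_B]]
  by (simp add: Z_mat_def B_def matrix_vector_mult_basis)

lemma eigenspace_B: "eigenspace (B \<delta>) (shift \<delta>) = harmonic (shift \<delta>)"
  unfolding eigenspace_def harmonic_def vec_eq_iff
  by (auto simp: B_mult_nth left_diff_distrib)

lemma eigenspace_Z:
  assumes "0 < \<delta>"
  shows "eigenspace (Z_mat T r lam P \<delta>) (1 / shift \<delta>) = harmonic (shift \<delta>)"
  unfolding Z_mat_def B_def[symmetric] eigenspace_B[symmetric]
  using eigenspace_matrix_inv[OF invertible_B[OF assms]] shift_pos[OF assms] by simp

lemma norm_minus_orth_proj_harmonic_le:
  assumes "c1 \<le> gap / 2" "c2 \<le> gap / 2" and y: "y \<in> harmonic c1"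
  shows "norm (y - orth_proj (harmonic c2) y)
    \<le> 2 * sqrt (real CARD('n)) / gap * \<bar>c2 - c1\<bar> * norm y"
proof -
  define d where "d = (\<chi> s. if s \<in> T then 0 else (c2 - c1) * y$s)"
  define z where "z = matrix_inv (shifted c2) *v d"
  have z: "shifted c2 *v z = d"
    unfolding z_def by (rule matrix_vector_mul_matrix_inv[OF invertible_shifted[OF assms(2)]])
  have "y + z \<in> harmonic c2"
    unfolding harmonic_def
  proof (intro CollectI allI impI)
    fix s assume "s \<notin> T"
    have "(shifted c2 *v z)$s = d$s" by (simp add: z)
    then have zs: "(a s - c2) * z$s - (\<Sum>j\<in>UNIV. P$s$j * z$j) = (c2 - c1) * y$s"
      using \<open>s \<notin> T\<close> by (simp add: shifted_mult_nth d_def)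
    have ys: "(a s - c1) * y$s = (\<Sum>j\<in>UNIV. P$s$j * y$j)"
      using y \<open>s \<notin> T\<close> by (simp add: harmonic_def)
    have "(\<Sum>j\<in>UNIV. P$s$j * (y + z)$j) = (\<Sum>j\<in>UNIV. P$s$j * y$j) + (\<Sum>j\<in>UNIV. P$s$j * z$j)"
      by (simp add: distrib_left sum.distrib)
    moreover have "(a s - c2) * (y + z)$s = (a s - c1) * y$s + ((a s - c2) * z$s - (c2 - c1) * y$s)"
      by (simp add: algebra_simps)
    ultimately show "(a s - c2) * (y + z)$s = (\<Sum>j\<in>UNIV. P$s$j * (y + z)$j)"
      using ys zs by linarith
  qed
  then have "norm (y - orth_proj (harmonic c2) y) \<le> norm z"
    using norm_minus_orth_proj_le[OF subspace_harmonic[OF assms(2)], of "y + z" y] by simp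
  moreover have "norm z \<le> 2 * sqrt (real CARD('n)) / gap * \<bar>c2 - c1\<bar> * norm y"
  proof -
    have "norm d \<le> norm ((c2 - c1) *\<^sub>R y)"
      by (rule norm_le_componentwise_cart) (simp add: d_def abs_mult)
    then have "sqrt (real CARD('n)) * norm (shifted c2 *v z)
        \<le> sqrt (real CARD('n)) * (\<bar>c2 - c1\<bar> * norm y)"
      by (simp add: z mult_left_mono)
    moreover have "gap / 2 * norm z \<le> sqrt (real CARD('n)) * norm (shifted c2 *v z)"
      using diag_dominant_norm_le[OF diag_dominant_shifted[OF assms(2)]] gap_pos by simp
    ultimately have "gap / 2 * norm z \<le> sqrt (real CARD('n)) * (\<bar>c2 - c1\<bar> * norm y)"
      by (rule order_trans[rotated])
    then show ?thesis
      using gap_pos by (simp add: field_simps)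
  qed
  ultimately show ?thesis
    by (rule order_trans)
qed

lemma onorm_orth_proj_harmonic_diff_le:
  assumes "0 \<le> c" "c \<le> gap / 2"
  shows "onorm (\<lambda>x. orth_proj (harmonic 0) x - orth_proj (harmonic c) x)
    \<le> 4 * sqrt (real CARD('n)) / gap * c"
proof -
  have "0 \<le> gap / 2" using gap_pos by simp
  have "norm (y - orth_proj (harmonic c) y) \<le> 2 * sqrt (real CARD('n)) / gap * c * norm y"
    if "y \<in> harmonic 0" for y
    using norm_minus_orth_proj_harmonic_le[of 0 c y] that assms gap_pos by simp
  moreover have "norm (y - orth_proj (harmonic 0) y) \<le> 2 * sqrt (real CARD('n)) / gap * c * norm y"
    if "y \<in> harmonic c" for y
    using norm_minus_orth_proj_harmonic_le[of c 0 y] that assms gap_pos by simp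
  ultimately have "norm (orth_proj (harmonic 0) x - orth_proj (harmonic c) x)
      \<le> 2 * (2 * sqrt (real CARD('n)) / gap * c) * norm x" for x
    using assms gap_pos \<open>0 \<le> gap / 2\<close>
    by (intro norm_orth_proj_diff_le subspace_harmonic) auto
  then show ?thesis
    by (intro onorm_le) (simp add: mult.assoc)
qed

lemma is_eigenvalue_Z_principal:
  assumes "0 < \<delta>" "shift \<delta> \<le> gap / 2"
  shows "is_eigenvalue (Z_mat T r lam P \<delta>) (complex_of_real (1 / shift \<delta>))"
proof -
  obtain t where "t \<in> T" using T_ne by blast
  define v where "v = matrix_inv (shifted (shift \<delta>)) *v axis t 1"
  have "shifted (shift \<delta>) *v v = axis t 1"
    unfolding v_def by (rule matrix_vector_mul_matrix_inv[OF invertible_shifted[OF assms(2)]])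
  then have "v \<noteq> 0" by auto
  moreover have "v \<in> eigenspace (Z_mat T r lam P \<delta>) (1 / shift \<delta>)"
    unfolding eigenspace_Z[OF assms(1)] harmonic_eq_span[OF assms(2)] v_def
    using \<open>t \<in> T\<close> by (intro span_base) auto
  ultimately show ?thesis
    by (intro is_eigenvalue_of_real) (auto simp: eigenspace_def)
qed

text \<open>Look at the row of an eigenvector \<open>v\<close> at a coordinate \<open>k\<close> where \<open>\<bar>v\<^sub>k\<bar>\<close> is maximal:
  a terminal \<open>k\<close> forces \<open>w = shift \<delta>\<close>, a non-terminal one forces \<open>\<bar>a\<^sub>k - w\<bar> \<le> 1\<close>.\<close>

lemma eigenvalue_B_cases:
  assumes "is_eigenvalue (B \<delta>) w"
  shows "w = complex_of_real (shift \<delta>) \<or> gap \<le> cmod w"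
proof -
  obtain v where "v \<noteq> 0" and v: "cmat (B \<delta>) *v v = w *s v"
    using assms unfolding is_eigenvalue_def by blast
  obtain k where k: "\<And>i. cmod (v$i) \<le> cmod (v$k)"
    using exists_max_norm_component[of v] by auto
  have "v$k \<noteq> 0"
  proof
    assume "v$k = 0"
    then have "v$i = 0" for i
      using k[of i] by simp
    with \<open>v \<noteq> 0\<close> show False
      by (simp add: vec_eq_iff)
  qed
  have row: "(\<Sum>j\<in>UNIV. complex_of_real (B \<delta> $k$j) * v$j) = w * v$k"
    using v[THEN arg_cong[where f = "\<lambda>u. u$k"]] by (simp add: cmat_mult_vec_nth)
  show ?thesis
  proof (cases "k \<in> T")
    case True
    then have "(\<Sum>j\<in>UNIV. complex_of_real (B \<delta> $k$j) * v$j) = complex_of_real (shift \<delta>) * v$k"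
      by (simp add: B_terminal_row if_distrib[of complex_of_real] if_distrib[of "\<lambda>x. x * _"]
          cong: if_cong)
    then show ?thesis using row \<open>v$k \<noteq> 0\<close> by simp
  next
    case False
    then have "complex_of_real (a k) * v$k - (\<Sum>j\<in>UNIV. complex_of_real (P$k$j) * v$j) = w * v$k"
      using row by (simp add: B_nonterminal_row left_diff_distrib sum_subtractf
          if_distrib[of complex_of_real] if_distrib[of "\<lambda>x. x * _"] cong: if_cong)
    then have "(complex_of_real (a k) - w) * v$k = (\<Sum>j\<in>UNIV. complex_of_real (P$k$j) * v$j)"
      by (simp add: algebra_simps)
    then have "cmod (complex_of_real (a k) - w) * cmod (v$k)
        \<le> (\<Sum>j\<in>UNIV. cmod (complex_of_real (P$k$j) * v$j))"
      by (metis norm_mult norm_sum)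
    also have "\<dots> \<le> (\<Sum>j\<in>UNIV. P$k$j * cmod (v$k))"
      by (intro sum_mono) (simp add: norm_mult P_nonneg k mult_left_mono)
    also have "\<dots> = cmod (v$k)"
      using stoch by (simp add: row_stochastic_def flip: sum_distrib_right)
    finally have "cmod (complex_of_real (a k) - w) \<le> 1"
      using \<open>v$k \<noteq> 0\<close> by simp
    then have "a k - 1 \<le> cmod w"
      using norm_triangle_ineq2[of "complex_of_real (a k)" w] by simp
    then show ?thesis using gap_le[OF False] by simp
  qed
qed

lemma eigenvalue_Z_lt_principal:
  assumes "0 < \<delta>" "shift \<delta> < gap" "is_eigenvalue (Z_mat T r lam P \<delta>) z"
    and "z \<noteq> complex_of_real (1 / shift \<delta>)"
  shows "cmod z < 1 / shift \<delta>"
proof -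
  have "z \<noteq> 0" and "is_eigenvalue (B \<delta>) (1 / z)"
    using is_eigenvalue_matrix_inv[OF invertible_B[OF assms(1)]] assms(3) by (auto simp: Z_mat_def B_def)
  moreover have "1 / z \<noteq> complex_of_real (shift \<delta>)"
    using assms(4) by (metis inverse_eq_divide inverse_inverse_eq of_real_inverse)
  ultimately have "gap \<le> 1 / cmod z"
    using eigenvalue_B_cases by (fastforce simp: norm_divide)
  then have "cmod z * gap \<le> 1"
    using \<open>z \<noteq> 0\<close> by (simp add: field_simps)
  moreover have "cmod z * shift \<delta> < cmod z * gap"
    using assms(2) \<open>z \<noteq> 0\<close> by simp
  ultimately show ?thesis
    using shift_pos[OF assms(1)] by (simp add: field_simps)
qed

lemma onorm_orth_proj_harmonic_tendsto_0:
  "((\<lambda>\<delta>. onorm (\<lambda>x. orth_proj (harmonic 0) x - orth_proj (harmonic (shift \<delta>)) x)) \<longlongrightarrow> 0)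
    (at_right 0)" (is "(?f \<longlongrightarrow> 0) _")
proof (rule tendsto_sandwich[OF _ _ tendsto_const])
  let ?K = "4 * sqrt (real CARD('n)) / gap"
  show "\<forall>\<^sub>F \<delta> in at_right 0. 0 \<le> ?f \<delta>"
    using eventually_small_shift
    by eventually_elim (simp add: onorm_orth_proj_diff_nonneg subspace_harmonic gap_pos less_imp_le)
  show "\<forall>\<^sub>F \<delta> in at_right 0. ?f \<delta> \<le> ?K * shift \<delta>"
    using eventually_small_shift
    by eventually_elim (rule onorm_orth_proj_harmonic_diff_le; simp add: shift_pos less_imp_le)
  show "((\<lambda>\<delta>. ?K * shift \<delta>) \<longlongrightarrow> 0) (at_right 0)"
    using tendsto_mult[OF tendsto_const shift_tendsto_0, of ?K] by simp
qed

lemma onorm_orth_proj_terminal_columns_tendsto_0: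
  "((\<lambda>\<delta>. onorm (\<lambda>x. orth_proj (span ((\<lambda>j. column j (Z_mat T r lam P \<delta>)) ` T)) x
      - orth_proj (eigenspace (Z_mat T r lam P \<delta>) (1 / shift \<delta>)) x)) \<longlongrightarrow> 0) (at_right 0)"
  by (rule Lim_transform_eventually[OF onorm_orth_proj_harmonic_tendsto_0
        eventually_mono[OF eventually_small_shift]])
    (simp add: span_terminal_columns eigenspace_Z)

end

theorem theorem3p11:
  fixes P :: "real^'n^'n" and T :: "'n set" and r :: "'n \<Rightarrow> real" and lam :: real
  assumes T_ne: "T \<noteq> {}"
    and stoch: "row_stochastic P"
    and absorbing: "\<forall>s\<in>T. P$s$s = 1"
    and lam: "lam > 0"
    and rneg: "\<forall>s. s \<notin> T \<longrightarrow> r s < 0"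
  shows "(\<forall>\<delta>>0. invertible (R_mat T r lam \<delta> - P)
            \<and> dim (span ((\<lambda>j. column j (Z_mat T r lam P \<delta>)) ` T)) = card T)
       \<and> (\<exists>\<delta>0>0. \<forall>\<delta>. 0 < \<delta> \<and> \<delta> < \<delta>0 \<longrightarrow>
            (let Z = Z_mat T r lam P \<delta>; \<mu> = 1 / (exp (\<delta> / lam) - 1) in
               is_eigenvalue Z (complex_of_real \<mu>)
             \<and> (\<forall>z. is_eigenvalue Z z \<and> z \<noteq> complex_of_real \<mu> \<longrightarrow> cmod z < \<mu>)
             \<and> dim (eigenspace Z \<mu>) = card T))
       \<and> ((\<lambda>\<delta>. onorm (\<lambda>x. orth_proj (span ((\<lambda>j. column j (Z_mat T r lam P \<delta>)) ` T)) x
                          - orth_proj (eigenspace (Z_mat T r lam P \<delta>) (1 / (exp (\<delta> / lam) - 1))) x))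
          \<longlongrightarrow> 0) (at_right 0)"
proof -
  interpret absorbing_chain P T r lam
    using assms by unfold_locales
  have principal:
    "is_eigenvalue (Z_mat T r lam P \<delta>) (complex_of_real (1 / shift \<delta>))
     \<and> (\<forall>z. is_eigenvalue (Z_mat T r lam P \<delta>) z \<and> z \<noteq> complex_of_real (1 / shift \<delta>)
          \<longrightarrow> cmod z < 1 / shift \<delta>)
     \<and> dim (eigenspace (Z_mat T r lam P \<delta>) (1 / shift \<delta>)) = card T"
    if "0 < \<delta>" "shift \<delta> < gap / 2" for \<delta>
    using that gap_pos is_eigenvalue_Z_principal eigenvalue_Z_lt_principal eigenspace_Z dim_harmonic
    by auto
  obtain \<delta>0 where "0 < \<delta>0" and small: "\<And>\<delta>. 0 < \<delta> \<Longrightarrow> \<delta> < \<delta>0 \<Longrightarrow> shift \<delta> < gap / 2"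
    using eventually_small_shift unfolding eventually_at_right_field by auto
  show ?thesis
    unfolding Let_def shift_def[symmetric] B_def[symmetric]
    using invertible_B dim_terminal_columns principal onorm_orth_proj_terminal_columns_tendsto_0
      \<open>0 < \<delta>0\<close> small
    by blast
qed

end
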